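(* Let $K$ be a field and $a\in K^{{\mathbb N}}$ a nonzero $K$-recurrence sequence of order $d$. (a) If $K$ has characteristic $0$ and $a$ is nondegenerate, then ${\mathcal Z}(a)$ does not contain a $(d-1)$-balanced subset. (b) If $K$ has positive characteristic and $a$ is simple and nondegenerate, then ${\mathcal Z}(a)$ does not contain a $(d-1)$-balanced subset.
   Context: ${\mathbb N}=\{0,1,2,\dots\}$, ${\mathcal Z}(a)=\{n\in{\mathbb N}\mid a(n)=0\}$. The minimum polynomial $P_a$ is the monic generator of $\{P\in K[E]\mid P(E)a=0\}$, $(Ea)(n)=a(n+1)$; its degree is the order of $a$. $a$ is simple if $P_a$ has distinct roots and nondegenerate if its roots are nonzero and no quotient of two distinct roots is a root of unity. For an integer $e\ge0$, an $e$-balanced subset of ${\mathbb N}$ is a set $\{m_0+k_1m_1+\cdots+k_em_e\mid k_1,\dots,k_e\in\{0,1\}\}$ with $m_0\in{\mathbb N}$ and $m_1,\dots,m_e$ positive integers. *)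

theory Defs
  imports "HOL-Computational_Algebra.Polynomial" "HOL-Algebra.Algebraic_Closure_Type"
begin

definition apply_shift :: "'a::field poly \<Rightarrow> (nat \<Rightarrow> 'a) \<Rightarrow> nat \<Rightarrow> 'a" where
  "apply_shift P a n = (\<Sum>i\<le>degree P. coeff P i * a (n + i))"

definition annihilates :: "'a::field poly \<Rightarrow> (nat \<Rightarrow> 'a) \<Rightarrow> bool" where
  "annihilates P a \<longleftrightarrow> (\<forall>n. apply_shift P a n = 0)"

definition is_recurrence :: "(nat \<Rightarrow> 'a::field) \<Rightarrow> bool" where
  "is_recurrence a \<longleftrightarrow> (\<exists>P. P \<noteq> 0 \<and> annihilates P a)"

definition min_poly :: "(nat \<Rightarrow> 'a::field) \<Rightarrow> 'a poly" where
  "min_poly a = (THE P. lead_coeff P = 1 \<and> annihilates P a \<and> (\<forall>Q. annihilates Q a \<longrightarrow> P dvd Q))"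

definition rec_order :: "(nat \<Rightarrow> 'a::field) \<Rightarrow> nat" where
  "rec_order a = degree (min_poly a)"

definition zero_set :: "(nat \<Rightarrow> 'a::zero) \<Rightarrow> nat set" where
  "zero_set a = {n. a n = 0}"

definition min_poly_roots :: "(nat \<Rightarrow> 'a::field) \<Rightarrow> 'a alg_closure set" where
  "min_poly_roots a = {x. poly (map_poly to_ac (min_poly a)) x = 0}"

definition simple_rec :: "(nat \<Rightarrow> 'a::field) \<Rightarrow> bool" where
  "simple_rec a \<longleftrightarrow> (\<forall>x\<in>min_poly_roots a. order x (map_poly to_ac (min_poly a)) = 1)"

definition nondegenerate :: "(nat \<Rightarrow> 'a::field) \<Rightarrow> bool" where
  "nondegenerate a \<longleftrightarrow>
     (\<forall>x\<in>min_poly_roots a. x \<noteq> 0) \<and>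
     (\<forall>x\<in>min_poly_roots a. \<forall>y\<in>min_poly_roots a. x \<noteq> y \<longrightarrow>
        \<not> (\<exists>n::nat. n > 0 \<and> (x / y) ^ n = 1))"

definition balanced_set :: "nat \<Rightarrow> nat \<Rightarrow> (nat \<Rightarrow> nat) \<Rightarrow> nat set" where
  "balanced_set e m0 m = {m0 + (\<Sum>i=1..e. k i * m i) | k. \<forall>i\<in>{1..e}. k i \<in> {0, 1}}"

definition is_balanced :: "nat \<Rightarrow> nat set \<Rightarrow> bool" where
  "is_balanced e S \<longleftrightarrow> (\<exists>m0 m. (\<forall>i\<in>{1..e}. m i > 0) \<and> S = balanced_set e m0 m)"

end

theory Submission
  imports Defs
begin

(* Pass to the algebraic closure and induct on the dimension e of the balanced set
   {m0 + k1 m1 + ... + ke me}, for an annihilating polynomial P of degree at most e + 1.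
   Pick a root l of P and put k = me.  The sequence c n = b (n + k) - l^k b n is annihilated
   by P / (X - l) and vanishes on the (e - 1)-balanced set with steps m1, ..., m(e-1), so c = 0
   by induction.  Thus P and X^k - l^k both annihilate b, hence so does the minimal polynomial
   of b, which divides both.  By nondegeneracy l is its only possible root, and l is a simple
   root: either because P is squarefree or, in characteristic 0, because X^k - l^k is.
   So b is geometric with ratio l, which is nonzero; as b vanishes at m0, b = 0. *)

definition nondegenerate_poly :: "'a::field poly \<Rightarrow> bool" where
  "nondegenerate_poly P \<longleftrightarrow>
     (\<forall>x. poly P x = 0 \<longrightarrow> x \<noteq> 0) \<and>
     (\<forall>x y. poly P x = 0 \<longrightarrow> poly P y = 0 \<longrightarrow> x \<noteq> y \<longrightarrow> \<not> (\<exists>n::nat. n > 0 \<and> (x / y) ^ n = 1))"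

lemma apply_shift_eq_sum:
  assumes "degree P \<le> N"
  shows "apply_shift P a n = (\<Sum>i\<le>N. coeff P i * a (n + i))"
proof -
  have "(\<Sum>i\<le>N. coeff P i * a (n + i)) = (\<Sum>i\<le>degree P. coeff P i * a (n + i))"
    by (rule sum.mono_neutral_right) (use assms in \<open>auto simp: coeff_eq_0 not_le\<close>)
  then show ?thesis by (simp add: apply_shift_def)
qed

lemma apply_shift_0 [simp]: "apply_shift 0 a n = 0"
  by (simp add: apply_shift_def)

lemma apply_shift_zero_seq [simp]: "apply_shift P (\<lambda>_. 0) n = 0"
  by (simp add: apply_shift_def)

lemma apply_shift_const: "apply_shift [:c:] a n = c * a n"
  by (simp add: apply_shift_def)

lemma apply_shift_add: "apply_shift (P + Q) a n = apply_shift P a n + apply_shift Q a n"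
proof -
  let ?N = "max (degree P) (degree Q)"
  have "degree (P + Q) \<le> ?N" by (rule degree_add_le) auto
  then show ?thesis
    by (simp add: apply_shift_eq_sum[of _ ?N] distrib_right sum.distrib)
qed

lemma apply_shift_diff: "apply_shift (P - Q) a n = apply_shift P a n - apply_shift Q a n"
proof -
  let ?N = "max (degree P) (degree Q)"
  have "degree (P - Q) \<le> ?N" by (rule degree_diff_le) auto
  then show ?thesis
    by (simp add: apply_shift_eq_sum[of _ ?N] left_diff_distrib sum_subtractf)
qed

lemma apply_shift_smult: "apply_shift (smult c P) a n = c * apply_shift P a n"
  by (simp add: apply_shift_eq_sum[of _ "degree P"] sum_distrib_left mult.assoc)

lemma apply_shift_pCons: "apply_shift (pCons c P) a n = c * a n + apply_shift P a (Suc n)"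
proof -
  have "apply_shift (pCons c P) a n = (\<Sum>i\<le>Suc (degree P). coeff (pCons c P) i * a (n + i))"
    by (rule apply_shift_eq_sum) (simp add: degree_pCons_le)
  also have "\<dots> = c * a n + (\<Sum>i\<le>degree P. coeff P i * a (Suc n + i))"
    by (subst sum.atMost_Suc_shift) simp
  finally show ?thesis by (simp add: apply_shift_def)
qed

lemma apply_shift_mult: "apply_shift (P * Q) a n = apply_shift P (apply_shift Q a) n"
proof (induction P arbitrary: n)
  case 0
  then show ?case by simp
next
  case (pCons c P)
  have "pCons c P * Q = smult c Q + pCons 0 (P * Q)" by simp
  then show ?case
    by (simp only: apply_shift_add apply_shift_smult apply_shift_pCons pCons.IH) simp
qed

lemma apply_shift_monom: "apply_shift (monom 1 k) a n = a (n + k)"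
proof (induction k arbitrary: n)
  case 0
  then show ?case by (simp add: apply_shift_def)
next
  case (Suc k)
  then show ?case by (simp only: monom_Suc apply_shift_pCons) simp
qed

lemma annihilates_iff: "annihilates P a \<longleftrightarrow> apply_shift P a = (\<lambda>_. 0)"
  by (simp add: annihilates_def fun_eq_iff)

lemma annihilates_mult_left:
  assumes "annihilates P a"
  shows "annihilates (Q * P) a"
proof -
  have "apply_shift P a = (\<lambda>_. 0)" using assms by (simp add: annihilates_iff)
  then show ?thesis by (simp add: annihilates_def apply_shift_mult)
qed

lemma annihilates_smult: "annihilates P a \<Longrightarrow> annihilates (smult c P) a"
  by (simp add: annihilates_def apply_shift_smult)

lemma annihilates_mod:
  assumes "annihilates P a" "annihilates Q a"
  shows "annihilates (Q mod P) a"
proof -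
  have "apply_shift Q a n = apply_shift (Q div P * P) a n + apply_shift (Q mod P) a n" for n
    by (simp only: apply_shift_add[symmetric] div_mult_mod_eq)
  then show ?thesis
    using assms annihilates_mult_left[OF assms(1), of "Q div P"] by (simp add: annihilates_def)
qed

lemma annihilates_const_imp_zero:
  assumes "annihilates P a" "P \<noteq> 0" "degree P = 0"
  shows "a = (\<lambda>_. 0)"
proof -
  obtain c where "P = [:c:]" using assms(3) by (rule degree_eq_zeroE)
  with assms(1,2) show ?thesis by (auto simp: annihilates_def apply_shift_const fun_eq_iff)
qed

lemma annihilates_apply_shift_if_dvd:
  assumes "annihilates (R * Q) a" "R dvd T"
  shows "annihilates Q (apply_shift T a)"
proof -
  obtain S where "T = R * S" using assms(2) ..
  then have "Q * T = S * (R * Q)" by (simp add: ac_simps)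
  then have "annihilates (Q * T) a" using annihilates_mult_left[OF assms(1), of S] by (simp only:)
  then show ?thesis by (simp add: annihilates_def apply_shift_mult)
qed

lemma monic_dvd_antisym:
  fixes P Q :: "'a::field poly"
  assumes "P dvd Q" "Q dvd P" "lead_coeff P = 1" "lead_coeff Q = 1"
  shows "P = Q"
proof -
  obtain R where R: "Q = P * R" using assms(1) ..
  have "P \<noteq> 0" "Q \<noteq> 0" using assms(3,4) by auto
  with R have "R \<noteq> 0" by auto
  have "degree Q \<le> degree P" using assms(2) \<open>P \<noteq> 0\<close> by (rule dvd_imp_degree_le)
  then have "degree R = 0" using R \<open>P \<noteq> 0\<close> \<open>R \<noteq> 0\<close> by (simp add: degree_mult_eq)
  then obtain c where c: "R = [:c:]" by (rule degree_eq_zeroE)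
  have "lead_coeff Q = lead_coeff P * lead_coeff R" unfolding R by (rule lead_coeff_mult)
  with assms(3,4) c have "c = 1" by simp
  with R c show ?thesis by simp
qed

lemma monic_annihilator_dvd_all_exists:
  assumes "is_recurrence a"
  shows "\<exists>M. lead_coeff M = 1 \<and> annihilates M a \<and> (\<forall>Q. annihilates Q a \<longrightarrow> M dvd Q)"
proof -
  obtain P0 where "P0 \<noteq> 0 \<and> annihilates P0 a" using assms by (auto simp: is_recurrence_def)
  then obtain P where P: "P \<noteq> 0" "annihilates P a"
    and least: "\<And>Q. Q \<noteq> 0 \<and> annihilates Q a \<Longrightarrow> degree P \<le> degree Q"
    using ex_has_least_nat[of "\<lambda>Q. Q \<noteq> 0 \<and> annihilates Q a" P0 degree] by blast
  define M where "M = smult (inverse (lead_coeff P)) P"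
  have "M \<noteq> 0" "lead_coeff M = 1" "annihilates M a" "degree M = degree P"
    using P by (simp_all add: M_def annihilates_smult)
  moreover have "M dvd Q" if "annihilates Q a" for Q
  proof -
    have "annihilates (Q mod M) a" using \<open>annihilates M a\<close> that by (rule annihilates_mod)
    moreover have "Q mod M = 0 \<or> degree (Q mod M) < degree P"
      using degree_mod_less[OF \<open>M \<noteq> 0\<close>] \<open>degree M = degree P\<close> by auto
    ultimately have "Q mod M = 0" using least[of "Q mod M"] by fastforce
    then show ?thesis by (simp add: mod_eq_0_iff_dvd)
  qed
  ultimately show ?thesis by blast
qed

lemma min_poly_spec:
  assumes "is_recurrence a"
  shows "lead_coeff (min_poly a) = 1 \<and> annihilates (min_poly a) a
    \<and> (\<forall>Q. annihilates Q a \<longrightarrow> min_poly a dvd Q)"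
  unfolding min_poly_def
proof (rule theI')
  show "\<exists>!M. lead_coeff M = 1 \<and> annihilates M a \<and> (\<forall>Q. annihilates Q a \<longrightarrow> M dvd Q)"
    using monic_annihilator_dvd_all_exists[OF assms] monic_dvd_antisym by metis
qed

lemma lead_coeff_min_poly: "is_recurrence a \<Longrightarrow> lead_coeff (min_poly a) = 1"
  and annihilates_min_poly: "is_recurrence a \<Longrightarrow> annihilates (min_poly a) a"
  and min_poly_dvd: "is_recurrence a \<Longrightarrow> annihilates Q a \<Longrightarrow> min_poly a dvd Q"
  using min_poly_spec by blast+

lemma annihilates_linear_imp_geometric:
  assumes "annihilates [:-l, 1:] a"
  shows "a (n + k) = l ^ k * a n"
proof (induction k)
  case (Suc k)
  have "a (Suc (n + k)) = l * a (n + k)"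
    using assms by (simp add: annihilates_def apply_shift_pCons apply_shift_const)
  with Suc show ?case by simp
qed simp

lemma annihilates_linear_imp_zero:
  assumes "annihilates [:-l, 1:] a" "l \<noteq> 0" "a m0 = 0"
  shows "a = (\<lambda>_. 0)"
proof
  fix n
  show "a n = 0"
  proof (cases "n \<le> m0")
    case True
    then have "a m0 = l ^ (m0 - n) * a n"
      using annihilates_linear_imp_geometric[OF assms(1), of n "m0 - n"] by simp
    with assms(2,3) show ?thesis by simp
  next
    case False
    then show ?thesis
      using annihilates_linear_imp_geometric[OF assms(1), of m0 "n - m0"] assms(3) by simp
  qed
qed

lemma apply_shift_binomial: "apply_shift (monom 1 k - [:c:]) a n = a (n + k) - c * a n"
  by (simp add: apply_shift_diff apply_shift_monom apply_shift_const)

lemma binomial_nonzero: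
  fixes c :: "'a::field"
  assumes "k > 0"
  shows "monom 1 k - [:c:] \<noteq> 0"
proof -
  obtain j where "k = Suc j" using assms by (cases k) auto
  then have "coeff (monom 1 k - [:c:]) k = 1" by simp
  then show ?thesis by (intro notI) simp
qed

lemma order_le_1_if_poly_pderiv_nonzero:
  fixes p :: "'a::idom poly"
  assumes "poly (pderiv p) x \<noteq> 0"
  shows "order x p \<le> 1"
proof (rule ccontr)
  assume "\<not> order x p \<le> 1"
  moreover have "p \<noteq> 0" using assms by auto
  ultimately have "[:-x, 1:] ^ 2 dvd p" by (simp add: order_divides)
  then obtain q where "p = [:-x, 1:] ^ 2 * q" ..
  then have "p = [:-x, 1:] * ([:-x, 1:] * q)" by (simp only: power2_eq_square mult.assoc)
  then have "poly (pderiv p) x = 0" by (simp only: pderiv_mult poly_add poly_mult) simp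
  with assms show False by contradiction
qed

lemma order_binomial_le_1:
  fixes l :: "'a::field"
  assumes "of_nat k \<noteq> (0::'a)" "l \<noteq> 0"
  shows "order l (monom 1 k - [:l ^ k:]) \<le> 1"
proof (rule order_le_1_if_poly_pderiv_nonzero)
  have "pderiv (monom 1 k - [:l ^ k:]) = monom (of_nat k) (k - 1)"
    by (simp add: pderiv_diff pderiv_monom)
  with assms show "poly (pderiv (monom 1 k - [:l ^ k:])) l \<noteq> 0"
    by (simp add: poly_monom)
qed

lemma nondegenerate_poly_dvd:
  assumes "nondegenerate_poly P" "Q dvd P" "P \<noteq> 0"
  shows "nondegenerate_poly Q"
proof -
  have "poly P x = 0" if "poly Q x = 0" for x
    using that assms(2) by (auto elim!: dvdE)
  with assms(1) show ?thesis unfolding nondegenerate_poly_def by blast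
qed

lemma rsquarefree_dvd:
  assumes "rsquarefree P" "Q dvd P"
  shows "rsquarefree Q"
  unfolding rsquarefree_def
proof (intro conjI allI)
  have "P \<noteq> 0" using assms(1) by (simp add: rsquarefree_def)
  with assms(2) show "Q \<noteq> 0" by auto
  fix x
  have "order x P = 0 \<or> order x P = 1" using assms(1) by (simp add: rsquarefree_def)
  moreover have "order x Q \<le> order x P" using \<open>P \<noteq> 0\<close> assms(2) by (rule dvd_imp_order_le)
  ultimately show "order x Q = 0 \<or> order x Q = 1" by linarith
qed

lemma alg_closed_dvd_linear_if_unique_simple_root:
  fixes G :: "'a::alg_closed_field poly"
  assumes "G \<noteq> 0" "\<And>x. poly G x = 0 \<Longrightarrow> x = l" "order l G \<le> 1"
  shows "G dvd [:-l, 1:]"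
proof -
  obtain H where G: "G = [:-l, 1:] ^ order l G * H" and H: "\<not> [:-l, 1:] dvd H"
    using order_decomp[OF assms(1)] by blast
  have "degree H = 0"
  proof (rule ccontr)
    assume "degree H \<noteq> 0"
    then obtain x where x: "poly H x = 0" using alg_closed_imp_poly_has_root by blast
    then have "poly G x = 0" by (subst G) simp
    then have "x = l" by (rule assms(2))
    with x H show False by (simp add: poly_eq_0_iff_dvd)
  qed
  moreover have "H \<noteq> 0" using G assms(1) by auto
  ultimately have "is_unit H" by (simp add: is_unit_iff_degree)
  moreover have "[:-l, 1:] ^ order l G dvd [:-l, 1:]"
    using le_imp_power_dvd[OF assms(3)] by simp
  ultimately show ?thesis by (subst G) (simp add: mult_unit_dvd_iff)
qed

lemma annihilates_linear_if_binomial_annihilates: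
  fixes P :: "'a::alg_closed_field poly"
  assumes "P \<noteq> 0" "annihilates P b" "annihilates (monom 1 k - [:l ^ k:]) b" "k > 0"
    "poly P l = 0" "nondegenerate_poly P" "rsquarefree P \<or> CHAR('a) = 0"
  shows "annihilates [:-l, 1:] b"
proof -
  define T where "T = monom 1 k - [:l ^ k:]"
  define M where "M = min_poly b"
  have rec: "is_recurrence b" using assms(1,2) by (auto simp: is_recurrence_def)
  have "M dvd P" "M dvd T" "annihilates M b" "M \<noteq> 0"
    using assms(2,3) min_poly_dvd[OF rec] annihilates_min_poly[OF rec] lead_coeff_min_poly[OF rec]
    by (auto simp: M_def T_def)
  have "T \<noteq> 0" unfolding T_def using assms(4) by (rule binomial_nonzero)
  have "l \<noteq> 0" using assms(5,6) by (auto simp: nondegenerate_poly_def)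
  have root: "x = l" if "poly M x = 0" for x
  proof (rule ccontr)
    assume "x \<noteq> l"
    have "poly P x = 0" "poly T x = 0" using that \<open>M dvd P\<close> \<open>M dvd T\<close> by (auto elim!: dvdE)
    then have "(x / l) ^ k = 1" using \<open>l \<noteq> 0\<close> by (simp add: T_def poly_monom power_divide)
    with \<open>x \<noteq> l\<close> \<open>poly P x = 0\<close> assms(4-6) show False
      unfolding nondegenerate_poly_def by blast
  qed
  have "order l M \<le> 1"
    using assms(7)
  proof
    assume "rsquarefree P"
    then have "order l P \<le> 1" by (auto simp: rsquarefree_def dest: spec[of _ l])
    then show ?thesis using dvd_imp_order_le[OF assms(1) \<open>M dvd P\<close>, where a = l] by linarith
  next
    assume "CHAR('a) = 0"
    then have "of_nat k \<noteq> (0::'a)" using assms(4) by (simp add: of_nat_eq_0_iff_char_dvd)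
    then have "order l T \<le> 1" unfolding T_def using \<open>l \<noteq> 0\<close> by (rule order_binomial_le_1)
    then show ?thesis using dvd_imp_order_le[OF \<open>T \<noteq> 0\<close> \<open>M dvd T\<close>, where a = l] by linarith
  qed
  then have "M dvd [:-l, 1:]"
    using alg_closed_dvd_linear_if_unique_simple_root \<open>M \<noteq> 0\<close> root by blast
  then obtain R where R: "[:-l, 1:] = M * R" ..
  have "annihilates (R * M) b" using \<open>annihilates M b\<close> by (rule annihilates_mult_left)
  then show ?thesis by (simp only: R mult.commute)
qed

lemma balanced_set_base: "m0 \<in> balanced_set e m0 m"
  unfolding balanced_set_def by (intro CollectI exI[of _ "\<lambda>_. 0::nat"]) simp

lemma balanced_set_SucI:
  assumes "x \<in> balanced_set e m0 m" "v \<in> {0, 1}"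
  shows "x + v * m (Suc e) \<in> balanced_set (Suc e) m0 m"
proof -
  obtain k where x: "x = m0 + (\<Sum>i=1..e. k i * m i)" and k: "\<forall>i\<in>{1..e}. k i \<in> {0, 1}"
    using assms(1) by (auto simp: balanced_set_def)
  have "(\<Sum>i=1..e. (k(Suc e := v)) i * m i) = (\<Sum>i=1..e. k i * m i)"
    by (rule sum.cong) auto
  then have "x + v * m (Suc e) = m0 + (\<Sum>i=1..Suc e. (k(Suc e := v)) i * m i)"
    using x by simp
  moreover have "\<forall>i\<in>{1..Suc e}. (k(Suc e := v)) i \<in> {0, 1}" using k assms(2) by auto
  ultimately show ?thesis unfolding balanced_set_def by blast
qed

(* One induction step for a balanced set whose last step is k; the premise quotient is
   where the induction hypothesis for P / (X - l) enters. *)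
lemma vanishes_if_binomial_shift_vanishes:
  fixes P :: "'a::alg_closed_field poly"
  assumes "P \<noteq> 0" "annihilates P b" "nondegenerate_poly P" "rsquarefree P \<or> CHAR('a) = 0"
    "b m0 = 0" "k > 0"
    and quotient: "\<And>l Q. P = [:-l, 1:] * Q \<Longrightarrow>
      annihilates Q (apply_shift (monom 1 k - [:l ^ k:]) b) \<Longrightarrow>
      apply_shift (monom 1 k - [:l ^ k:]) b = (\<lambda>_. 0)"
  shows "b = (\<lambda>_. 0)"
proof (cases "degree P = 0")
  case True
  with assms(1,2) show ?thesis by (blast intro: annihilates_const_imp_zero)
next
  case False
  then obtain l where l: "poly P l = 0" using alg_closed_imp_poly_has_root by blast
  then obtain Q where P: "P = [:-l, 1:] * Q" by (auto simp: poly_eq_0_iff_dvd elim!: dvdE)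
  define T where "T = monom 1 k - [:l ^ k:]"
  have "[:-l, 1:] dvd T" by (simp add: T_def poly_eq_0_iff_dvd[symmetric] poly_monom)
  moreover have "annihilates ([:-l, 1:] * Q) b" using assms(2) P by simp
  ultimately have "annihilates Q (apply_shift T b)" by (intro annihilates_apply_shift_if_dvd)
  then have "annihilates T b" using quotient[OF P] by (simp add: T_def annihilates_iff)
  then have "annihilates [:-l, 1:] b"
    using annihilates_linear_if_binomial_annihilates[OF assms(1,2) _ assms(6) l assms(3,4)]
    by (simp add: T_def)
  moreover have "l \<noteq> 0" using assms(3) l by (auto simp: nondegenerate_poly_def)
  ultimately show ?thesis using assms(5) by (rule annihilates_linear_imp_zero)
qed

lemma vanishes_if_zero_set_contains_balanced_set:
  fixes P :: "'a::alg_closed_field poly"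
  assumes "P \<noteq> 0" "annihilates P b" "nondegenerate_poly P" "rsquarefree P \<or> CHAR('a) = 0"
    "degree P \<le> Suc e" "\<forall>i\<in>{1..e}. m i > 0" "balanced_set e m0 m \<subseteq> zero_set b"
  shows "b = (\<lambda>_. 0)"
  using assms
proof (induction e arbitrary: P b)
  case 0
  \<comment> \<open>Here the quotient by X - l is a nonzero constant, so any step k works; take k = 1.\<close>
  have "b m0 = 0" using "0.prems"(7) balanced_set_base by (auto simp: zero_set_def)
  then show ?case
  proof (rule vanishes_if_binomial_shift_vanishes[OF "0.prems"(1-4) _ zero_less_one])
    fix l Q
    let ?c = "apply_shift (monom 1 1 - [:l ^ 1:]) b"
    assume P: "P = [:-l, 1:] * Q" and c: "annihilates Q ?c"
    have "Q \<noteq> 0" using P "0.prems"(1) by auto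
    have "degree P = Suc (degree Q)"
      unfolding P using \<open>Q \<noteq> 0\<close> by (subst degree_mult_eq) auto
    then have "degree Q = 0" using "0.prems"(5) by simp
    with c \<open>Q \<noteq> 0\<close> show "?c = (\<lambda>_. 0)" by (rule annihilates_const_imp_zero)
  qed
next
  case (Suc e)
  have "b m0 = 0" using Suc.prems(7) balanced_set_base by (auto simp: zero_set_def)
  moreover have "m (Suc e) > 0" using Suc.prems(6) by simp
  ultimately show ?case
  proof (rule vanishes_if_binomial_shift_vanishes[OF Suc.prems(1-4)])
    fix l Q
    let ?c = "apply_shift (monom 1 (m (Suc e)) - [:l ^ m (Suc e):]) b"
    assume P: "P = [:-l, 1:] * Q" and c: "annihilates Q ?c"
    have "Q dvd P" unfolding P by (rule dvd_triv_right)
    have "Q \<noteq> 0" using P Suc.prems(1) by auto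
    have "degree P = Suc (degree Q)"
      unfolding P using \<open>Q \<noteq> 0\<close> by (subst degree_mult_eq) auto
    show "?c = (\<lambda>_. 0)"
    proof (rule Suc.IH[OF \<open>Q \<noteq> 0\<close> c])
      show "nondegenerate_poly Q" using Suc.prems(3) \<open>Q dvd P\<close> Suc.prems(1)
        by (rule nondegenerate_poly_dvd)
      show "rsquarefree Q \<or> CHAR('a) = 0" using Suc.prems(4) rsquarefree_dvd[OF _ \<open>Q dvd P\<close>] by auto
      show "degree Q \<le> Suc e" using \<open>degree P = Suc (degree Q)\<close> Suc.prems(5) by simp
      show "\<forall>i\<in>{1..e}. m i > 0" using Suc.prems(6) by simp
      show "balanced_set e m0 m \<subseteq> zero_set ?c"
      proof
        fix x
        assume x: "x \<in> balanced_set e m0 m"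
        have "x \<in> balanced_set (Suc e) m0 m" "x + m (Suc e) \<in> balanced_set (Suc e) m0 m"
          using balanced_set_SucI[OF x, of 0] balanced_set_SucI[OF x, of 1] by simp_all
        then have "b x = 0" "b (x + m (Suc e)) = 0" using Suc.prems(7) by (auto simp: zero_set_def)
        then show "x \<in> zero_set ?c" by (simp add: zero_set_def apply_shift_binomial)
      qed
    qed
  qed
qed

lemma apply_shift_map_poly_to_ac:
  "apply_shift (map_poly to_ac P) (\<lambda>n. to_ac (a n)) n = to_ac (apply_shift P a n)"
  by (simp add: apply_shift_def degree_map_poly coeff_map_poly to_ac_sum)

lemma zero_set_contains_no_balanced_set:
  fixes a :: "nat \<Rightarrow> 'a::field"
  assumes "is_recurrence a" "a \<noteq> (\<lambda>_. 0)" "nondegenerate a" "CHAR('a) = 0 \<or> simple_rec a"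
  shows "\<not> (\<exists>S. S \<subseteq> zero_set a \<and> is_balanced (rec_order a - 1) S)"
proof
  assume "\<exists>S. S \<subseteq> zero_set a \<and> is_balanced (rec_order a - 1) S"
  then obtain m0 m where m: "\<forall>i\<in>{1..rec_order a - 1}. m i > 0"
    and sub: "balanced_set (rec_order a - 1) m0 m \<subseteq> zero_set a"
    unfolding is_balanced_def by blast
  define P where "P = map_poly to_ac (min_poly a)"
  define b where "b = (\<lambda>n. to_ac (a n))"
  have "lead_coeff P = 1"
    using lead_coeff_min_poly[OF assms(1)] by (simp add: P_def degree_map_poly coeff_map_poly)
  then have "P \<noteq> 0" by auto
  have "annihilates P b"
    using annihilates_min_poly[OF assms(1)]
    by (simp add: annihilates_def P_def b_def apply_shift_map_poly_to_ac)
  have "nondegenerate_poly P"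
    using assms(3) by (simp add: nondegenerate_def nondegenerate_poly_def min_poly_roots_def P_def)
  have sqf: "rsquarefree P \<or> CHAR('a alg_closure) = 0"
    using assms(4)
  proof
    assume "simple_rec a"
    then have "order x P = 0 \<or> order x P = 1" for x
      using order_0I[of P x] by (auto simp: simple_rec_def min_poly_roots_def P_def)
    with \<open>P \<noteq> 0\<close> show ?thesis by (simp add: rsquarefree_def)
  qed simp
  have deg: "degree P \<le> Suc (rec_order a - 1)"
    by (simp add: P_def rec_order_def degree_map_poly)
  have zeros: "balanced_set (rec_order a - 1) m0 m \<subseteq> zero_set b"
    using sub by (simp add: zero_set_def b_def)
  have "b = (\<lambda>_. 0)"
    using \<open>P \<noteq> 0\<close> \<open>annihilates P b\<close> \<open>nondegenerate_poly P\<close> sqf deg m zeros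
    by (rule vanishes_if_zero_set_contains_balanced_set)
  then show False using assms(2) by (auto simp: b_def fun_eq_iff)
qed

theorem lemma2p6:
  fixes a :: "nat \<Rightarrow> 'a::field"
  assumes "is_recurrence a" and "a \<noteq> (\<lambda>n. 0)"
  shows "(CHAR('a) = 0 \<and> nondegenerate a \<longrightarrow>
            \<not> (\<exists>S. S \<subseteq> zero_set a \<and> is_balanced (rec_order a - 1) S))
       \<and> (CHAR('a) > 0 \<and> simple_rec a \<and> nondegenerate a \<longrightarrow>
            \<not> (\<exists>S. S \<subseteq> zero_set a \<and> is_balanced (rec_order a - 1) S))"
  using zero_set_contains_no_balanced_set[OF assms] by blast

end
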